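(* On the open set $U=\{(\vec x,\vec p)\in\mathbb{R}^6:\vec x\wedge\vec p\neq0\}$ with bracket $\{x^a,p^b\}=\delta^{ab}$, consider the constraints $\phi_1=\vec x\cdot\vec p$ and $\phi_2=|\vec x|^2-|\vec p|^2$. They are second class, with $\{\phi_1,\phi_2\}=-2(|\vec x|^2+|\vec p|^2)$, and define the Dirac bracket $$\{F,G\}_D=\{F,G\}-\sum_{i,j}\{F,\phi_i\}(C^{-1})^{ij}\{\phi_j,G\},\qquad C_{ij}=\{\phi_i,\phi_j\}.$$ On the surface $\Sigma=\{\phi_1=\phi_2=0\}\cap U$ set $\mathcal N=|\vec J|$ with $\vec J=\vec x\wedge\vec p$, $\vec K=|\vec x|\,\vec x$, $\vec L=|\vec p|\,\vec p$. Then on $\Sigma$: $|\vec J|^2=|\vec K|^2=|\vec L|^2=\mathcal N^2$, $\vec J\cdot\vec K=\vec J\cdot\vec L=\vec K\cdot\vec L=0$, and the Dirac brackets are $$\{J_a,J_b\}_D=\epsilon_{abc}J_c,\quad \{J_a,K_b\}_D=\epsilon_{abc}K_c,\quad \{J_a,L_b\}_D=\epsilon_{abc}L_c,$$ $$\{K_a,K_b\}_D=-\epsilon_{abc}J_c,\quad \{L_a,L_b\}_D=-\epsilon_{abc}J_c,\quad \{K_a,L_b\}_D=\delta_{ab}\mathcal N,$$ $$\{\mathcal N,J_a\}_D=0,\quad \{\mathcal N,K_a\}_D=-L_a,\quad \{\mathcal N,L_a\}_D=K_a,$$ i.e. $(\mathcal N,\vec J,\vec K,\vec L)$ span an $\mathfrak{so}(3,2)$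 algebra.
   Context: $\epsilon_{abc}$ is the totally antisymmetric symbol with $\epsilon_{123}=1$; repeated indices are summed. Dirac brackets of functions are evaluated on the constraint surface $\Sigma$. *)

theory Defs
  imports "HOL-Analysis.Analysis"
begin

text \<open>Phase space R^6 = R^3 x R^3; observables are functions F x p.
  Coordinates are indexed by the numeral type 3 (indices 1,2,3, with 3 = 0).\<close>

type_synonym obs = "real^3 \<Rightarrow> real^3 \<Rightarrow> real"

definition dX :: "obs \<Rightarrow> 3 \<Rightarrow> real^3 \<Rightarrow> real^3 \<Rightarrow> real" where
  "dX F a x p = deriv (\<lambda>t. F (x + t *\<^sub>R axis a 1) p) 0"

definition dP :: "obs \<Rightarrow> 3 \<Rightarrow> real^3 \<Rightarrow> real^3 \<Rightarrow> real" where
  "dP F a x p = deriv (\<lambda>t. F x (p + t *\<^sub>R axis a 1)) 0"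

definition pb :: "obs \<Rightarrow> obs \<Rightarrow> real^3 \<Rightarrow> real^3 \<Rightarrow> real" where
  "pb F G x p = (\<Sum>a\<in>UNIV. dX F a x p * dP G a x p - dP F a x p * dX G a x p)"

text \<open>The two constraints phi_1 = x.p, phi_2 = |x|^2 - |p|^2 (index 2 of type 2 is 2 = 0).\<close>
definition phi :: "2 \<Rightarrow> obs" where
  "phi i = (if i = 1 then (\<lambda>x p. x \<bullet> p) else (\<lambda>x p. (norm x)\<^sup>2 - (norm p)\<^sup>2))"

definition Cmat :: "real^3 \<Rightarrow> real^3 \<Rightarrow> real^2^2" where
  "Cmat x p = (\<chi> i j. pb (phi i) (phi j) x p)"

definition dirac :: "obs \<Rightarrow> obs \<Rightarrow> real^3 \<Rightarrow> real^3 \<Rightarrow> real" where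
  "dirac F G x p = pb F G x p
     - (\<Sum>i\<in>UNIV. \<Sum>j\<in>UNIV. pb F (phi i) x p * (matrix_inv (Cmat x p) $ i $ j) * pb (phi j) G x p)"

definition U :: "((real^3, real^3) prod) set" where
  "U = {(x, p). cross3 x p \<noteq> 0}"

definition Sigma_c :: "((real^3, real^3) prod) set" where
  "Sigma_c = {(x, p). (x, p) \<in> U \<and> phi 1 x p = 0 \<and> phi 2 x p = 0}"

text \<open>Levi-Civita symbol; cyclic in index arithmetic mod 3, eps 1 2 3 = 1.\<close>
definition eps :: "3 \<Rightarrow> 3 \<Rightarrow> 3 \<Rightarrow> real" where
  "eps a b c = (if b = a + 1 \<and> c = a + 2 then 1 else if b = a + 2 \<and> c = a + 1 then -1 else 0)"

definition Jv :: "real^3 \<Rightarrow> real^3 \<Rightarrow> real^3" where "Jv x p = cross3 x p"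
definition Kv :: "real^3 \<Rightarrow> real^3 \<Rightarrow> real^3" where "Kv x p = norm x *\<^sub>R x"
definition Lv :: "real^3 \<Rightarrow> real^3 \<Rightarrow> real^3" where "Lv x p = norm p *\<^sub>R p"
definition Nf :: obs where "Nf x p = norm (Jv x p)"

definition Jc :: "3 \<Rightarrow> obs" where "Jc a = (\<lambda>x p. Jv x p $ a)"
definition Kc :: "3 \<Rightarrow> obs" where "Kc a = (\<lambda>x p. Kv x p $ a)"
definition Lc :: "3 \<Rightarrow> obs" where "Lc a = (\<lambda>x p. Lv x p $ a)"

end

theory Submission
  imports Defs
begin

text \<open>Writing the Poisson bracket as \<open>\<nabla>\<^sub>xF \<bullet> \<nabla>\<^sub>pG - \<nabla>\<^sub>pF \<bullet> \<nabla>\<^sub>xG\<close>, every bracket among the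
  generators and the constraints becomes an identity between explicit vectors built from \<open>x\<close>,
  \<open>p\<close> and cross products. \<open>J\<close> and \<open>N\<close> commute with both constraints, so their Dirac
  brackets are Poisson brackets. On \<open>\<Sigma>\<close> one has \<open>|x| = |p| = r\<close> and \<open>x \<bullet> p = 0\<close>, hence
  \<open>{K,\<phi>\<^sub>1} = 2K\<close>, \<open>{K,\<phi>\<^sub>2} = -2L\<close>, \<open>{L,\<phi>\<^sub>1} = -2L\<close>, \<open>{L,\<phi>\<^sub>2} = -2K\<close>, and the inverse
  constraint matrix has entries \<open>\<plusminus>1/(4r\<^sup>2)\<close>. The Dirac correction therefore adds
  \<open>(K\<^sub>aL\<^sub>b - L\<^sub>aK\<^sub>b)/r\<^sup>2 = \<epsilon>\<^sub>a\<^sub>b\<^sub>cJ\<^sub>c\<close> to \<open>{K\<^sub>a,K\<^sub>b} = 0\<close> and \<open>{L\<^sub>a,L\<^sub>b} = 0\<close>, and removes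
  \<open>(K\<^sub>aK\<^sub>b + L\<^sub>aL\<^sub>b)/r\<^sup>2\<close> from \<open>{K\<^sub>a,L\<^sub>b} = x\<^sub>ax\<^sub>b + p\<^sub>ap\<^sub>b + r\<^sup>2\<delta>\<^sub>a\<^sub>b\<close>.\<close>

lemma has_real_derivative_norm_line:
  fixes v e :: "'a::real_inner"
  assumes "v \<noteq> 0"
  shows "((\<lambda>t. norm (v + t *\<^sub>R e)) has_real_derivative (v \<bullet> e / norm v)) (at 0)"
proof -
  have sq: "(\<lambda>t. (v + t *\<^sub>R e) \<bullet> (v + t *\<^sub>R e)) = (\<lambda>t. v \<bullet> v + 2 * t * (v \<bullet> e) + t * t * (e \<bullet> e))"
    by (auto simp: inner_add inner_commute algebra_simps)
  have "((\<lambda>t. (v + t *\<^sub>R e) \<bullet> (v + t *\<^sub>R e)) has_real_derivative 2 * (v \<bullet> e)) (at 0)"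
    unfolding sq by (rule derivative_eq_intros refl | simp)+
  from DERIV_chain2[OF DERIV_real_sqrt this] assms
  have "((\<lambda>t. sqrt ((v + t *\<^sub>R e) \<bullet> (v + t *\<^sub>R e))) has_real_derivative
          inverse (sqrt (v \<bullet> v)) / 2 * (2 * (v \<bullet> e))) (at 0)"
    by simp
  then show ?thesis
    by (simp add: norm_eq_sqrt_inner field_simps)
qed

lemma has_real_derivative_affine: "((\<lambda>t. c + t * d) has_real_derivative d) (at 0)"
  by (rule derivative_eq_intros refl | simp)+

lemma power2_norm_line: "(norm (v + t *\<^sub>R axis a 1))\<^sup>2 = (norm v)\<^sup>2 + 2 * t * v $ a + t * t"
  by (simp add: power2_norm_eq_inner inner_add inner_commute inner_axis algebra_simps)

lemma dX_eqI:
  "((\<lambda>t. F (x + t *\<^sub>R axis a 1) p) has_real_derivative D) (at 0) \<Longrightarrow> dX F a x p = D"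
  unfolding dX_def by (rule DERIV_imp_deriv)

lemma dP_eqI:
  "((\<lambda>t. F x (p + t *\<^sub>R axis a 1)) has_real_derivative D) (at 0) \<Longrightarrow> dP F a x p = D"
  unfolding dP_def by (rule DERIV_imp_deriv)

lemma dX_Jc: "dX (Jc b) a x p = cross3 (axis a 1) p $ b"
  by (rule dX_eqI) (simp add: Jc_def Jv_def cross_add_left cross_mult_left has_real_derivative_affine)

lemma dP_Jc: "dP (Jc b) a x p = cross3 x (axis a 1) $ b"
  by (rule dP_eqI) (simp add: Jc_def Jv_def cross_add_right cross_mult_right has_real_derivative_affine)

lemma dX_Kc: "x \<noteq> 0 \<Longrightarrow> dX (Kc b) a x p = x $ a / norm x * x $ b + norm x * axis a 1 $ b"
  unfolding Kc_def Kv_def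
  by (rule dX_eqI, simp, (rule derivative_eq_intros has_real_derivative_norm_line refl | simp)+)
     (simp add: inner_axis)

lemma dP_Kc: "dP (Kc b) a x p = 0"
  by (rule dP_eqI) (simp add: Kc_def Kv_def)

lemma dX_Lc: "dX (Lc b) a x p = 0"
  by (rule dX_eqI) (simp add: Lc_def Lv_def)

lemma dP_Lc: "p \<noteq> 0 \<Longrightarrow> dP (Lc b) a x p = p $ a / norm p * p $ b + norm p * axis a 1 $ b"
  unfolding Lc_def Lv_def
  by (rule dP_eqI, simp, (rule derivative_eq_intros has_real_derivative_norm_line refl | simp)+)
     (simp add: inner_axis)

lemma dX_Nf: "cross3 x p \<noteq> 0 \<Longrightarrow> dX Nf a x p = cross3 x p \<bullet> cross3 (axis a 1) p / norm (cross3 x p)"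
  by (rule dX_eqI) (simp add: Nf_def Jv_def cross_add_left cross_mult_left has_real_derivative_norm_line)

lemma dP_Nf: "cross3 x p \<noteq> 0 \<Longrightarrow> dP Nf a x p = cross3 x p \<bullet> cross3 x (axis a 1) / norm (cross3 x p)"
  by (rule dP_eqI) (simp add: Nf_def Jv_def cross_add_right cross_mult_right has_real_derivative_norm_line)

lemma dX_phi1: "dX (phi 1) a x p = p $ a"
  by (rule dX_eqI, simp add: phi_def inner_add_left inner_axis inner_axis',
      (rule derivative_eq_intros refl | simp)+)

lemma dP_phi1: "dP (phi 1) a x p = x $ a"
  by (rule dP_eqI, simp add: phi_def inner_add_right inner_axis inner_commute,
      (rule derivative_eq_intros refl | simp)+)

lemma dX_phi2: "dX (phi 2) a x p = 2 * x $ a"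
  by (rule dX_eqI, simp add: phi_def power2_norm_line, (rule derivative_eq_intros refl | simp)+)

lemma dP_phi2: "dP (phi 2) a x p = - 2 * p $ a"
  by (rule dP_eqI, simp add: phi_def power2_norm_line, (rule derivative_eq_intros refl | simp)+)

definition gradX :: "obs \<Rightarrow> real^3 \<Rightarrow> real^3 \<Rightarrow> real^3" where
  "gradX F x p = (\<chi> a. dX F a x p)"

definition gradP :: "obs \<Rightarrow> real^3 \<Rightarrow> real^3 \<Rightarrow> real^3" where
  "gradP F x p = (\<chi> a. dP F a x p)"

lemma pb_eq_inner_grad: "pb F G x p = gradX F x p \<bullet> gradP G x p - gradP F x p \<bullet> gradX G x p"
  by (simp add: pb_def gradX_def gradP_def inner_vec_def sum_subtractf)

lemma pb_antisym: "pb G F x p = - pb F G x p"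
  unfolding pb_def by (simp add: sum_negf[symmetric] algebra_simps)

lemma gradX_Jc: "gradX (Jc b) x p = cross3 p (axis b 1)"
  unfolding gradX_def dX_Jc vec_eq_iff
  using exhaust_3[of b] by (auto simp: forall_3 cross_components axis_def)

lemma gradP_Jc: "gradP (Jc b) x p = cross3 (axis b 1) x"
  unfolding gradP_def dP_Jc vec_eq_iff
  using exhaust_3[of b] by (auto simp: forall_3 cross_components axis_def)

lemma gradX_Kc: "x \<noteq> 0 \<Longrightarrow> gradX (Kc b) x p = (x $ b / norm x) *\<^sub>R x + norm x *\<^sub>R axis b 1"
  by (simp add: gradX_def dX_Kc vec_eq_iff axis_def)

lemma gradP_Kc: "gradP (Kc b) x p = 0"
  by (simp add: gradP_def dP_Kc vec_eq_iff)

lemma gradX_Lc: "gradX (Lc b) x p = 0"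
  by (simp add: gradX_def dX_Lc vec_eq_iff)

lemma gradP_Lc: "p \<noteq> 0 \<Longrightarrow> gradP (Lc b) x p = (p $ b / norm p) *\<^sub>R p + norm p *\<^sub>R axis b 1"
  by (simp add: gradP_def dP_Lc vec_eq_iff axis_def)

lemma gradX_Nf:
  assumes "cross3 x p \<noteq> 0"
  shows "gradX Nf x p = (1 / Nf x p) *\<^sub>R cross3 p (cross3 x p)"
  unfolding gradX_def dX_Nf[OF assms] Nf_def Jv_def vec_eq_iff
  by (simp add: forall_3 cross_components axis_def inner_vec_def sum_3 divide_simps algebra_simps)

lemma gradP_Nf:
  assumes "cross3 x p \<noteq> 0"
  shows "gradP Nf x p = (1 / Nf x p) *\<^sub>R cross3 (cross3 x p) x"
  unfolding gradP_def dP_Nf[OF assms] Nf_def Jv_def vec_eq_iff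
  by (simp add: forall_3 cross_components axis_def inner_vec_def sum_3 divide_simps algebra_simps)

lemma grad_phi:
  "gradX (phi 1) x p = p" "gradP (phi 1) x p = x"
  "gradX (phi 2) x p = 2 *\<^sub>R x" "gradP (phi 2) x p = - 2 *\<^sub>R p"
  by (simp_all add: gradX_def gradP_def dX_phi1 dP_phi1 dX_phi2 dP_phi2 vec_eq_iff)

lemma inner_cross3_cross3: "cross3 u v \<bullet> cross3 w z = (u \<bullet> w) * (v \<bullet> z) - (u \<bullet> z) * (v \<bullet> w)"
  by (simp add: cross3_simps)

lemma inner_cross3_axis: "cross3 u v \<bullet> cross3 (axis a 1) (axis b 1) = u $ a * v $ b - u $ b * v $ a"
  by (simp add: inner_cross3_cross3 inner_axis)

lemma cross3_cross3_left: "cross3 (cross3 u v) w = (u \<bullet> w) *\<^sub>R v - (v \<bullet> w) *\<^sub>R u"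
  by (simp add: cross3_simps forall_3)

lemma cross3_cross3_right: "cross3 u (cross3 v w) = (u \<bullet> w) *\<^sub>R v - (u \<bullet> v) *\<^sub>R w"
  by (simp add: cross_skew[of u] cross3_cross3_left inner_commute)

lemma sum_eps: "(\<Sum>c\<in>UNIV. eps a b c * v $ c) = v \<bullet> cross3 (axis a 1) (axis b 1)"
  using exhaust_3[of a] exhaust_3[of b]
  by (auto simp: eps_def sum_3 cross_components axis_def inner_vec_def)

lemma pb_phi_phi:
  "pb (phi 1) (phi 1) x p = 0" "pb (phi 2) (phi 2) x p = 0"
  "pb (phi 1) (phi 2) x p = - 2 * ((norm x)\<^sup>2 + (norm p)\<^sup>2)"
  "pb (phi 2) (phi 1) x p = 2 * ((norm x)\<^sup>2 + (norm p)\<^sup>2)"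
  unfolding pb_def dX_phi1 dP_phi1 dX_phi2 dP_phi2
  by (simp_all add: sum_3 power2_norm_eq_inner inner_vec_def algebra_simps)

lemma Cmat_eq:
  "Cmat x p = (let s = 2 * ((norm x)\<^sup>2 + (norm p)\<^sup>2) in vector [vector [0, -s], vector [s, 0]])"
  unfolding Cmat_def Let_def by (simp add: vec_eq_iff forall_2 pb_phi_phi vector_2)

lemma matrix_inv_unique:
  fixes A :: "'a::semiring_1^'n^'n"
  assumes "A ** B = mat 1" "B ** A = mat 1"
  shows "matrix_inv A = B"
proof -
  let ?inv = "\<lambda>A'. A ** A' = mat 1 \<and> A' ** A = mat 1"
  have inv: "?inv (matrix_inv A)"
    unfolding matrix_inv_def by (rule someI[of ?inv B]) (use assms in auto)
  have "matrix_inv A = (B ** A) ** matrix_inv A"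
    using assms by (simp add: matrix_mul_lid)
  also have "\<dots> = B"
    using inv by (simp add: matrix_mul_assoc[symmetric] matrix_mul_rid)
  finally show ?thesis .
qed

lemma
  assumes "x \<noteq> 0 \<or> p \<noteq> 0"
  defines "s \<equiv> 2 * ((norm x)\<^sup>2 + (norm p)\<^sup>2)"
  shows matrix_inv_Cmat: "matrix_inv (Cmat x p) = vector [vector [0, 1 / s], vector [- 1 / s, 0]]"
    and invertible_Cmat: "invertible (Cmat x p)"
proof -
  have "s \<noteq> 0"
    using assms by (auto simp: add_nonneg_eq_0_iff)
  let ?B = "vector [vector [0, 1 / s], vector [- 1 / s, 0]] :: real^2^2"
  have inv: "Cmat x p ** ?B = mat 1" "?B ** Cmat x p = mat 1"
    unfolding Cmat_eq Let_def s_def[symmetric] using \<open>s \<noteq> 0\<close>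
    by (simp_all add: vec_eq_iff forall_2 matrix_matrix_mult_def sum_2 vector_2 mat_def)
  then show "matrix_inv (Cmat x p) = ?B"
    by (rule matrix_inv_unique)
  from inv show "invertible (Cmat x p)"
    unfolding invertible_def by blast
qed

lemma dirac_eq:
  assumes "x \<noteq> 0 \<or> p \<noteq> 0"
  shows "dirac F G x p = pb F G x p
    - (pb F (phi 1) x p * pb (phi 2) G x p - pb F (phi 2) x p * pb (phi 1) G x p)
      / (2 * ((norm x)\<^sup>2 + (norm p)\<^sup>2))"
  unfolding dirac_def matrix_inv_Cmat[OF assms]
  by (simp add: sum_2 vector_2 diff_divide_distrib add_divide_distrib algebra_simps)

lemma dirac_eq_pb:
  "x \<noteq> 0 \<or> p \<noteq> 0 \<Longrightarrow> pb F (phi 1) x p = 0 \<Longrightarrow> pb F (phi 2) x p = 0 \<Longrightarrow>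
    dirac F G x p = pb F G x p"
  by (simp add: dirac_eq)

lemma Kc_apply: "Kc a x p = norm x * x $ a"
  by (simp add: Kc_def Kv_def)

lemma Lc_apply: "Lc a x p = norm p * p $ a"
  by (simp add: Lc_def Lv_def)

lemma Sigma_cD:
  assumes "(x, p) \<in> Sigma_c"
  shows "cross3 x p \<noteq> 0" "x \<noteq> 0" "p \<noteq> 0" "x \<bullet> p = 0" "norm p = norm x"
    and "Nf x p = (norm x)\<^sup>2"
proof -
  show J: "cross3 x p \<noteq> 0" and xp: "x \<bullet> p = 0"
    using assms by (auto simp: Sigma_c_def U_def phi_def)
  then show "x \<noteq> 0" "p \<noteq> 0" by auto
  have "(norm x)\<^sup>2 = (norm p)\<^sup>2"
    using assms by (auto simp: Sigma_c_def phi_def)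
  then show np: "norm p = norm x" by (simp add: power2_eq_iff_nonneg)
  have "(norm (cross3 x p))\<^sup>2 = ((norm x)\<^sup>2)\<^sup>2"
    using norm_cross_dot[of x p] xp np by (simp add: power_mult_distrib)
  then have "norm (cross3 x p) = (norm x)\<^sup>2"
    by (rule power2_eq_imp_eq) simp_all
  then show "Nf x p = (norm x)\<^sup>2"
    by (simp add: Nf_def Jv_def)
qed

lemma Sigma_c_invariants:
  assumes "(x, p) \<in> Sigma_c"
  shows "(norm (Jv x p))\<^sup>2 = (Nf x p)\<^sup>2" "(norm (Kv x p))\<^sup>2 = (Nf x p)\<^sup>2"
    "(norm (Lv x p))\<^sup>2 = (Nf x p)\<^sup>2"
    "Jv x p \<bullet> Kv x p = 0" "Jv x p \<bullet> Lv x p = 0" "Kv x p \<bullet> Lv x p = 0"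
  using Sigma_cD[OF assms]
  by (simp_all add: Nf_def Jv_def Kv_def Lv_def dot_cross_self power_mult_distrib)

lemma pb_Jc_phi: "pb (Jc a) (phi 1) x p = 0" "pb (Jc a) (phi 2) x p = 0"
  by (simp_all add: pb_eq_inner_grad gradX_Jc gradP_Jc grad_phi cross3_simps)

text \<open>\<open>\<phi>\<^sub>1\<close> generates the dilations \<open>(x, p) \<mapsto> (\<lambda>x, p/\<lambda>)\<close> and \<open>\<phi>\<^sub>2\<close> the hyperbolic rotations
  \<open>(x, p) \<mapsto> (x cosh s - p sinh s, p cosh s - x sinh s)\<close>; both preserve \<open>x \<times> p\<close>.\<close>

lemma pb_Nf_phi:
  assumes "cross3 x p \<noteq> 0"
  shows "pb Nf (phi 1) x p = 0" "pb Nf (phi 2) x p = 0"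
proof -
  have "cross3 p (cross3 x p) \<bullet> x = cross3 (cross3 x p) x \<bullet> p"
    by (simp add: cross3_simps)
  then show "pb Nf (phi 1) x p = 0"
    by (simp add: pb_eq_inner_grad gradX_Nf[OF assms] gradP_Nf[OF assms] grad_phi)
  show "pb Nf (phi 2) x p = 0"
    by (simp add: pb_eq_inner_grad gradX_Nf[OF assms] gradP_Nf[OF assms] grad_phi dot_cross_self)
qed

lemma pb_Kc_phi1: "x \<noteq> 0 \<Longrightarrow> pb (Kc a) (phi 1) x p = 2 * Kc a x p"
  by (simp add: pb_eq_inner_grad gradX_Kc gradP_Kc grad_phi inner_add_left inner_axis' dot_square_norm
      Kc_apply power2_eq_square)

lemma pb_Lc_phi1: "p \<noteq> 0 \<Longrightarrow> pb (Lc a) (phi 1) x p = - 2 * Lc a x p"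
  by (simp add: pb_eq_inner_grad gradX_Lc gradP_Lc grad_phi inner_add_left inner_axis' dot_square_norm
      Lc_apply power2_eq_square)

lemma pb_Kc_phi2_Sigma: "(x, p) \<in> Sigma_c \<Longrightarrow> pb (Kc a) (phi 2) x p = - 2 * Lc a x p"
  by (simp add: pb_eq_inner_grad gradX_Kc gradP_Kc grad_phi Sigma_cD inner_add_left inner_axis'
      Lc_apply)

lemma pb_Lc_phi2_Sigma: "(x, p) \<in> Sigma_c \<Longrightarrow> pb (Lc a) (phi 2) x p = - 2 * Kc a x p"
  by (simp add: pb_eq_inner_grad gradX_Lc gradP_Lc grad_phi Sigma_cD inner_add_left inner_axis'
      inner_commute[of p x] Kc_apply)

lemma pb_Jc_Jc: "pb (Jc a) (Jc b) x p = Jv x p \<bullet> cross3 (axis a 1) (axis b 1)"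
  by (simp add: pb_eq_inner_grad gradX_Jc gradP_Jc Jv_def inner_cross3_cross3 inner_axis inner_axis'
      inner_commute algebra_simps)

lemma pb_Jc_Kc:
  assumes "x \<noteq> 0"
  shows "pb (Jc a) (Kc b) x p = Kv x p \<bullet> cross3 (axis a 1) (axis b 1)"
proof -
  have "cross3 (axis a 1) y \<bullet> axis b 1 = - (y \<bullet> cross3 (axis a 1) (axis b 1))" for y :: "real^3"
    by (simp add: cross3_simps)
  with assms show ?thesis
    by (simp add: pb_eq_inner_grad gradX_Jc gradP_Jc gradX_Kc gradP_Kc Kv_def inner_add_right
        dot_cross_self)
qed

lemma pb_Jc_Lc:
  assumes "p \<noteq> 0"
  shows "pb (Jc a) (Lc b) x p = Lv x p \<bullet> cross3 (axis a 1) (axis b 1)"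
proof -
  have "cross3 y (axis a 1) \<bullet> axis b 1 = y \<bullet> cross3 (axis a 1) (axis b 1)" for y :: "real^3"
    by (simp add: cross3_simps)
  with assms show ?thesis
    by (simp add: pb_eq_inner_grad gradX_Jc gradP_Jc gradP_Lc gradX_Lc Lv_def inner_add_right
        dot_cross_self)
qed

lemma pb_Kc_Kc: "pb (Kc a) (Kc b) x p = 0"
  by (simp add: pb_eq_inner_grad gradP_Kc)

lemma pb_Lc_Lc: "pb (Lc a) (Lc b) x p = 0"
  by (simp add: pb_eq_inner_grad gradX_Lc)

lemma pb_Kc_Lc_Sigma:
  "(x, p) \<in> Sigma_c \<Longrightarrow>
    pb (Kc a) (Lc b) x p = x $ a * x $ b + p $ a * p $ b + (if a = b then (norm x)\<^sup>2 else 0)"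
  by (simp add: pb_eq_inner_grad gradX_Kc gradP_Kc gradX_Lc gradP_Lc Sigma_cD inner_add_left
      inner_add_right inner_axis inner_axis' inner_axis_axis field_simps power2_eq_square)
    (simp add: axis_def)

lemma pb_Nf_Jc: "cross3 x p \<noteq> 0 \<Longrightarrow> pb Nf (Jc a) x p = 0"
  by (simp add: pb_eq_inner_grad gradX_Nf gradP_Nf gradX_Jc gradP_Jc inner_cross3_cross3
      dot_cross_self inner_commute)

lemma pb_Nf_Kc_Sigma: "(x, p) \<in> Sigma_c \<Longrightarrow> pb Nf (Kc a) x p = - Lc a x p"
  by (simp add: pb_eq_inner_grad gradX_Nf gradP_Nf gradX_Kc gradP_Kc Sigma_cD cross3_cross3_left
      inner_add_right inner_axis inner_commute[of p x] dot_square_norm Lc_apply power2_eq_square)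

lemma pb_Nf_Lc_Sigma: "(x, p) \<in> Sigma_c \<Longrightarrow> pb Nf (Lc a) x p = Kc a x p"
  by (simp add: pb_eq_inner_grad gradX_Nf gradP_Nf gradX_Lc gradP_Lc Sigma_cD cross3_cross3_right
      inner_add_right inner_axis inner_commute[of p x] dot_square_norm Kc_apply power2_eq_square)

lemma dirac_Jc_eq_pb: "x \<noteq> 0 \<or> p \<noteq> 0 \<Longrightarrow> dirac (Jc a) G x p = pb (Jc a) G x p"
  by (simp add: dirac_eq_pb pb_Jc_phi)

lemma dirac_Nf_eq_pb: "cross3 x p \<noteq> 0 \<Longrightarrow> dirac Nf G x p = pb Nf G x p"
  by (auto intro: dirac_eq_pb simp: pb_Nf_phi)

lemma sum_eps_components:
  "(\<Sum>c\<in>UNIV. eps a b c * Jc c x p) = Jv x p \<bullet> cross3 (axis a 1) (axis b 1)"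
  "(\<Sum>c\<in>UNIV. eps a b c * Kc c x p) = Kv x p \<bullet> cross3 (axis a 1) (axis b 1)"
  "(\<Sum>c\<in>UNIV. eps a b c * Lc c x p) = Lv x p \<bullet> cross3 (axis a 1) (axis b 1)"
  by (simp_all add: Jc_def Kc_def Lc_def sum_eps)

lemma dirac_Kc_Kc_Sigma:
  assumes "(x, p) \<in> Sigma_c"
  shows "dirac (Kc a) (Kc b) x p = - (Jv x p \<bullet> cross3 (axis a 1) (axis b 1))"
  using Sigma_cD[OF assms]
  by (simp add: dirac_eq pb_antisym[of "phi _" "Kc b"] pb_Kc_phi1 pb_Kc_phi2_Sigma[OF assms] pb_Kc_Kc
      Kc_apply Lc_apply Jv_def inner_cross3_axis field_simps power2_eq_square)

lemma dirac_Lc_Lc_Sigma: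
  assumes "(x, p) \<in> Sigma_c"
  shows "dirac (Lc a) (Lc b) x p = - (Jv x p \<bullet> cross3 (axis a 1) (axis b 1))"
  using Sigma_cD[OF assms]
  by (simp add: dirac_eq pb_antisym[of "phi _" "Lc b"] pb_Lc_phi1 pb_Lc_phi2_Sigma[OF assms] pb_Lc_Lc
      Kc_apply Lc_apply Jv_def inner_cross3_axis field_simps power2_eq_square)

lemma dirac_Kc_Lc_Sigma:
  assumes "(x, p) \<in> Sigma_c"
  shows "dirac (Kc a) (Lc b) x p = (if a = b then Nf x p else 0)"
  using Sigma_cD[OF assms]
  by (simp add: dirac_eq pb_antisym[of "phi _" "Lc b"] pb_Kc_phi1 pb_Kc_phi2_Sigma[OF assms]
      pb_Lc_phi1 pb_Lc_phi2_Sigma[OF assms] pb_Kc_Lc_Sigma[OF assms]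
      Kc_apply Lc_apply field_simps power2_eq_square)

theorem mainTheorem6:
  shows "(\<forall>x p. pb (phi 1) (phi 2) x p = - 2 * ((norm x)\<^sup>2 + (norm p)\<^sup>2))
    \<and> (\<forall>x p. (x, p) \<in> U \<longrightarrow> invertible (Cmat x p))
    \<and> (\<forall>x p. (x, p) \<in> Sigma_c \<longrightarrow>
        (norm (Jv x p))\<^sup>2 = (Nf x p)\<^sup>2 \<and> (norm (Kv x p))\<^sup>2 = (Nf x p)\<^sup>2
      \<and> (norm (Lv x p))\<^sup>2 = (Nf x p)\<^sup>2
      \<and> Jv x p \<bullet> Kv x p = 0 \<and> Jv x p \<bullet> Lv x p = 0 \<and> Kv x p \<bullet> Lv x p = 0
      \<and> (\<forall>a b.
          dirac (Jc a) (Jc b) x p = (\<Sum>c\<in>UNIV. eps a b c * Jc c x p)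
        \<and> dirac (Jc a) (Kc b) x p = (\<Sum>c\<in>UNIV. eps a b c * Kc c x p)
        \<and> dirac (Jc a) (Lc b) x p = (\<Sum>c\<in>UNIV. eps a b c * Lc c x p)
        \<and> dirac (Kc a) (Kc b) x p = - (\<Sum>c\<in>UNIV. eps a b c * Jc c x p)
        \<and> dirac (Lc a) (Lc b) x p = - (\<Sum>c\<in>UNIV. eps a b c * Jc c x p)
        \<and> dirac (Kc a) (Lc b) x p = (if a = b then Nf x p else 0))
      \<and> (\<forall>a.
          dirac Nf (Jc a) x p = 0
        \<and> dirac Nf (Kc a) x p = - Lc a x p
        \<and> dirac Nf (Lc a) x p = Kc a x p))"
proof (intro conjI allI impI)
  fix x p
  show "pb (phi 1) (phi 2) x p = - 2 * ((norm x)\<^sup>2 + (norm p)\<^sup>2)"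
    by (rule pb_phi_phi)
  show "(x, p) \<in> U \<Longrightarrow> invertible (Cmat x p)"
    by (rule invertible_Cmat) (auto simp: U_def)
next
  fix x p a b
  assume on_Sigma: "(x, p) \<in> Sigma_c"
  note S = Sigma_cD[OF on_Sigma]
  show "dirac (Jc a) (Jc b) x p = (\<Sum>c\<in>UNIV. eps a b c * Jc c x p)"
    "dirac (Jc a) (Kc b) x p = (\<Sum>c\<in>UNIV. eps a b c * Kc c x p)"
    "dirac (Jc a) (Lc b) x p = (\<Sum>c\<in>UNIV. eps a b c * Lc c x p)"
    using S by (simp_all add: dirac_Jc_eq_pb sum_eps_components pb_Jc_Jc pb_Jc_Kc pb_Jc_Lc)
  show "dirac (Kc a) (Kc b) x p = - (\<Sum>c\<in>UNIV. eps a b c * Jc c x p)"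
    "dirac (Lc a) (Lc b) x p = - (\<Sum>c\<in>UNIV. eps a b c * Jc c x p)"
    "dirac (Kc a) (Lc b) x p = (if a = b then Nf x p else 0)"
    using on_Sigma
    by (simp_all add: sum_eps_components dirac_Kc_Kc_Sigma dirac_Lc_Lc_Sigma dirac_Kc_Lc_Sigma)
  show "dirac Nf (Jc a) x p = 0" "dirac Nf (Kc a) x p = - Lc a x p" "dirac Nf (Lc a) x p = Kc a x p"
    using on_Sigma S by (simp_all add: dirac_Nf_eq_pb pb_Nf_Jc pb_Nf_Kc_Sigma pb_Nf_Lc_Sigma)
qed (use Sigma_c_invariants in blast)+

end
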